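(* Let $M=(E,\mathcal{L})$ be a matroid with finitarization $M^{\mathrm{fin}}$, and define $\hat{M}=(E,\mathcal{K})$ where $S\in\mathcal{K}$ if and only if there exist a base $F$ of $M^{\mathrm{fin}}$ and a base $B$ of $M$ with $B\subseteq F$ and $S\subseteq F\setminus B$. If $M$ is nearly finitary and $\hat{M}$ is a matroid, then $M$ is $k$-nearly finitary for some integer $k$.
   Context: A matroid $(E,\mathcal{L})$: $\emptyset\in\mathcal{L}$; subsets of independent sets are independent; if $B$ is maximal in $\mathcal{L}$ and $A\in\mathcal{L}$ is not maximal, then $A\cup\{b\}\in\mathcal{L}$ for some $b\in B\setminus A$; for $A\in\mathcal{L}$ and $A\subseteq X\subseteq E$ the family $\{S\in\mathcal{L}:A\subseteq S\subseteq X\}$ has a maximal element. Bases are maximal independent sets. The finitarization $M^{\mathrm{fin}}=(E,\mathcal{L}^{\mathrm{fin}})$, where $\mathcal{L}^{\mathrm{fin}}$ is the set of $S\subseteq E$ all of whose finite subsets lie in $\mathcal{L}$, is a matroid. $M$ is nearly finitary if $F\setminus B$ is finite whenever a base $F$ of $M^{\mathrm{fin}}$ contains a base $B$ of $M$; $M$ is $k$-nearly finitary if $|F\setminus B|\le k$ for all such pairs. *)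

theory Defs
  imports Main
begin

definition maximal_in :: "'a set set \<Rightarrow> 'a set \<Rightarrow> bool" where
  "maximal_in \<F> S \<longleftrightarrow> S \<in> \<F> \<and> (\<forall>T\<in>\<F>. S \<subseteq> T \<longrightarrow> T = S)"

definition matroid :: "'a set \<Rightarrow> 'a set set \<Rightarrow> bool" where
  "matroid E L \<longleftrightarrow>
     (\<forall>S\<in>L. S \<subseteq> E) \<and>
     {} \<in> L \<and>
     (\<forall>A B. B \<in> L \<longrightarrow> A \<subseteq> B \<longrightarrow> A \<in> L) \<and>
     (\<forall>A B. maximal_in L B \<longrightarrow> A \<in> L \<longrightarrow> \<not> maximal_in L A \<longrightarrow>
         (\<exists>b\<in>B - A. insert b A \<in> L)) \<and>
     (\<forall>A X. A \<in> L \<longrightarrow> A \<subseteq> X \<longrightarrow> X \<subseteq> E \<longrightarrow>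
         (\<exists>S. maximal_in {S \<in> L. A \<subseteq> S \<and> S \<subseteq> X} S))"

definition is_base :: "'a set set \<Rightarrow> 'a set \<Rightarrow> bool" where
  "is_base L B \<longleftrightarrow> maximal_in L B"

definition finitarization :: "'a set \<Rightarrow> 'a set set \<Rightarrow> 'a set set" where
  "finitarization E L = {S. S \<subseteq> E \<and> (\<forall>T. T \<subseteq> S \<longrightarrow> finite T \<longrightarrow> T \<in> L)}"

definition nearly_finitary :: "'a set \<Rightarrow> 'a set set \<Rightarrow> bool" where
  "nearly_finitary E L \<longleftrightarrow>
     (\<forall>F B. is_base (finitarization E L) F \<longrightarrow> is_base L B \<longrightarrow> B \<subseteq> F \<longrightarrow> finite (F - B))"

definition k_nearly_finitary :: "nat \<Rightarrow> 'a set \<Rightarrow> 'a set set \<Rightarrow> bool" where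
  "k_nearly_finitary k E L \<longleftrightarrow>
     (\<forall>F B. is_base (finitarization E L) F \<longrightarrow> is_base L B \<longrightarrow> B \<subseteq> F \<longrightarrow>
        finite (F - B) \<and> card (F - B) \<le> k)"

definition M_hat :: "'a set \<Rightarrow> 'a set set \<Rightarrow> 'a set set" where
  "M_hat E L = {S. \<exists>F B. is_base (finitarization E L) F \<and> is_base L B \<and> B \<subseteq> F \<and> S \<subseteq> F - B}"

end

theory Submission
  imports Defs
begin

text \<open>If M is nearly finitary, every independent set of \<open>\<hat>M\<close> is finite, so a base B0 of
 the matroid \<open>\<hat>M\<close> is finite. In a matroid with a finite base no finite independent set is
 larger than that base (exchange argument). Every difference F - B of a base F of the
 finitarization and a base B of M contained in it is independent in \<open>\<hat>M\<close>, hence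
 \<open>card (F - B) \<le> card B0\<close>.\<close>

lemma matroid_subset_closed:
  assumes "matroid E L" "I \<in> L" "J \<subseteq> I"
  shows "J \<in> L"
proof -
  have "\<forall>A B. B \<in> L \<longrightarrow> A \<subseteq> B \<longrightarrow> A \<in> L"
    using assms(1) unfolding matroid_def by (elim conjE)
  then show ?thesis
    using assms(2,3) by blast
qed

lemma matroid_augment:
  assumes "matroid E L" "maximal_in L B" "A \<in> L" "\<not> maximal_in L A"
  obtains b where "b \<in> B - A" "insert b A \<in> L"
proof -
  have "\<forall>A B. maximal_in L B \<longrightarrow> A \<in> L \<longrightarrow> \<not> maximal_in L A \<longrightarrow>
         (\<exists>b\<in>B - A. insert b A \<in> L)"
    using assms(1) unfolding matroid_def by (elim conjE)
  then show thesis
    using assms(2-4) that by blast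
qed

lemma matroid_has_base:
  assumes "matroid E L"
  obtains B where "maximal_in L B"
proof -
  have empty: "{} \<in> L"
    using assms unfolding matroid_def by (elim conjE)
  have ind_sub: "\<forall>S\<in>L. S \<subseteq> E"
    using assms unfolding matroid_def by (elim conjE)
  have "\<forall>A X. A \<in> L \<longrightarrow> A \<subseteq> X \<longrightarrow> X \<subseteq> E \<longrightarrow>
      (\<exists>S. maximal_in {S \<in> L. A \<subseteq> S \<and> S \<subseteq> X} S)"
    using assms unfolding matroid_def by (elim conjE)
  then obtain B where "maximal_in {S \<in> L. {} \<subseteq> S \<and> S \<subseteq> E} B"
    using empty by blast
  moreover have "{S \<in> L. {} \<subseteq> S \<and> S \<subseteq> E} = L"
    using ind_sub by blast
  ultimately show thesis
    using that by simp
qed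

text \<open>Induction on \<open>card (B - I)\<close>: replacing an element of \<open>I - B\<close> by an element of B
 keeps the cardinality of I and shrinks \<open>B - I\<close>.\<close>

lemma matroid_card_le_finite_base:
  assumes m: "matroid E L" and B: "maximal_in L B" "finite B"
    and I: "I \<in> L" "finite I"
  shows "card I \<le> card B"
  using I
proof (induction "card (B - I)" arbitrary: I rule: less_induct)
  case less
  show ?case
  proof (cases "I \<subseteq> B")
    case True
    then show ?thesis
      using B(2) by (simp add: card_mono)
  next
    case False
    then obtain x where x: "x \<in> I" "x \<notin> B"
      by blast
    have "I - {x} \<in> L"
      using matroid_subset_closed[OF m less.prems(1)] by blast
    moreover have "\<not> maximal_in L (I - {x})"
      using less.prems(1) x unfolding maximal_in_def by blast
    ultimately obtain b where b: "b \<in> B - (I - {x})" "insert b (I - {x}) \<in> L"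
      using matroid_augment[OF m B(1)] by blast
    define I' where "I' = insert b (I - {x})"
    have b_new: "b \<in> B - I"
      using b x by auto
    have "card I' = card I"
      unfolding I'_def using b_new x less.prems(2) card_Suc_Diff1 by fastforce
    have "B - I' = (B - I) - {b}"
      unfolding I'_def using x by auto
    then have "card (B - I') < card (B - I)"
      using b_new B(2) by (metis card_Diff1_less finite_Diff)
    moreover have "I' \<in> L" "finite I'"
      unfolding I'_def using b(2) less.prems(2) by simp_all
    ultimately have "card I' \<le> card B"
      by (rule less.hyps)
    with \<open>card I' = card I\<close> show ?thesis
      by simp
  qed
qed

lemma base_diff_in_M_hat:
  assumes "is_base (finitarization E L) F" "is_base L B" "B \<subseteq> F"
  shows "F - B \<in> M_hat E L"
  using assms unfolding M_hat_def by blast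

lemma nearly_finitary_M_hat_finite:
  assumes "nearly_finitary E L" "S \<in> M_hat E L"
  shows "finite S"
  using assms unfolding M_hat_def nearly_finitary_def by (auto intro: finite_subset)

theorem theorem3p4p1:
  fixes E :: "'a set" and L :: "'a set set"
  assumes "matroid E L"
    and "nearly_finitary E L"
    and "matroid E (M_hat E L)"
  shows "\<exists>k::nat. k_nearly_finitary k E L"
proof -
  obtain B0 where B0: "maximal_in (M_hat E L) B0"
    using matroid_has_base[OF assms(3)] .
  have fin_B0: "finite B0"
    using B0 nearly_finitary_M_hat_finite[OF assms(2)] unfolding maximal_in_def by blast
  have "k_nearly_finitary (card B0) E L"
    unfolding k_nearly_finitary_def
  proof (intro allI impI)
    fix F B
    assume "is_base (finitarization E L) F" "is_base L B" "B \<subseteq> F"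
    then have diff_ind: "F - B \<in> M_hat E L"
      by (rule base_diff_in_M_hat)
    then have "finite (F - B)"
      using nearly_finitary_M_hat_finite[OF assms(2)] by blast
    then show "finite (F - B) \<and> card (F - B) \<le> card B0"
      using matroid_card_le_finite_base[OF assms(3) B0 fin_B0 diff_ind] by blast
  qed
  then show ?thesis
    by blast
qed

end
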